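(* Let $r>1$ and let $n$ be a positive integer. Then $$C_{r^n}(1)\le \frac1n\cdot\frac{r}{r-1}.$$
   Context: For $s>1$, $\mathcal A_s=\{w\in\mathbb C: 1/s<|w|<s\}$. $C_s(1)$ denotes Carathéodory's infinitesimal metric of $\mathcal A_s$ at the point $1$ evaluated on the tangent vector $1$ (identifying tangent spaces with $\mathbb C$), i.e. $C_s(1)=\sup\{|g'(1)|: g:\mathcal A_s\to\Delta \text{ holomorphic},\ g(1)=0\}$, $\Delta$ the unit disc. *)

theory Defs
  imports "HOL-Complex_Analysis.Complex_Analysis"
begin

definition annulus :: "real \<Rightarrow> complex set" where
  "annulus s = {w. 1 / s < norm w \<and> norm w < s}"

text \<open>Caratheodory infinitesimal metric of the annulus at the point 1 on the tangent vector 1: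
  supremum of |g'(1)| over holomorphic g from the annulus into the open unit disc with g(1) = 0.\<close>
definition cara_annulus :: "real \<Rightarrow> real" where
  "cara_annulus s = Sup {norm (deriv g 1) | g.
      g holomorphic_on annulus s \<and> g ` annulus s \<subseteq> ball 0 1 \<and> g 1 = 0}"

end

theory Submission
  imports Defs
begin

text \<open>Compose a competitor g with the disc map
  \<open>z \<mapsto> (1 + \<rho> z)^n\<close>, \<open>\<rho> = 1 - 1/r\<close>, which sends the unit disc into the annulus
  \<open>A\<^bsub>r^n\<^esub>\<close> (the disc \<open>|w - 1| < \<rho>\<close> lies in \<open>A\<^bsub>r\<^esub>\<close>, and n-th powers map \<open>A\<^bsub>r\<^esub>\<close>
  into \<open>A\<^bsub>r^n\<^esub>\<close>) and sends 0 to 1 with derivative \<open>n \<rho>\<close>. By the Schwarz lemma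
  the composite has derivative of modulus at most 1 at 0, so \<open>|g'(1)| n \<rho> \<le> 1\<close>.\<close>

lemma open_annulus: "open (annulus s)"
  unfolding annulus_def
  by (intro open_Collect_conj open_Collect_less continuous_intros)

lemma ball_one_subset_annulus:
  fixes r :: real
  assumes "r > 1"
  shows "ball 1 (1 - 1 / r) \<subseteq> annulus r"
proof
  fix w :: complex
  assume "w \<in> ball 1 (1 - 1 / r)"
  then have d: "norm (w - 1) < 1 - 1 / r"
    by (simp add: dist_norm norm_minus_commute)
  have "1 - norm (w - 1) \<le> norm w" "norm w \<le> 1 + norm (w - 1)"
    using norm_triangle_ineq2[of 1 "1 - w"] norm_triangle_ineq[of 1 "w - 1"]
    by (simp_all add: norm_minus_commute)
  moreover have "1 + (1 - 1 / r) \<le> r"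
    using assms mult_right_mono[of 1 r "r - 1"] by (simp add: field_simps)
  ultimately show "w \<in> annulus r"
    using d by (simp add: annulus_def)
qed

lemma power_mem_annulus:
  assumes "w \<in> annulus r" and "n > 0"
  shows "w ^ n \<in> annulus (r ^ n)"
proof -
  have w: "1 / r < norm w" "norm w < r"
    using assms(1) by (simp_all add: annulus_def)
  then have "r > 0"
    by (metis norm_ge_zero order.strict_trans1)
  then have "(1 / r) ^ n < norm w ^ n" "norm w ^ n < r ^ n"
    using w assms(2) by (simp_all add: power_strict_mono)
  then show ?thesis
    by (simp add: annulus_def norm_power power_divide)
qed

lemma norm_deriv_mult_le_one_Schwarz:
  assumes "open S" and "g holomorphic_on S" and "g ` S \<subseteq> ball 0 1" and "g a = 0"
    and "\<phi> holomorphic_on ball 0 1" and "\<phi> ` ball 0 1 \<subseteq> S" and "\<phi> 0 = a"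
  shows "norm (deriv g a) * norm (deriv \<phi> 0) \<le> 1"
proof -
  have "a \<in> S"
    using assms(6,7) by auto
  have hol: "(g \<circ> \<phi>) holomorphic_on ball 0 1"
    using holomorphic_on_compose_gen[OF assms(5,2,6)] .
  have "(g \<circ> \<phi>) 0 = 0"
    using assms(4,7) by simp
  moreover have "norm ((g \<circ> \<phi>) z) < 1" if "norm z < 1" for z
  proof -
    have "\<phi> z \<in> S"
      using assms(6) that by auto
    then show ?thesis
      using assms(3) by auto
  qed
  ultimately have Schwarz: "norm (deriv (g \<circ> \<phi>) 0) \<le> 1"
    by (intro Schwarz_Lemma(2)[OF hol, of 0]) simp_all
  have "(g has_field_derivative deriv g a) (at (\<phi> 0))"
    using assms(1,2,7) \<open>a \<in> S\<close> holomorphic_derivI by blast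
  moreover have "(\<phi> has_field_derivative deriv \<phi> 0) (at 0)"
    using assms(5) holomorphic_derivI[of \<phi> "ball 0 1" 0] by simp
  ultimately have "deriv (g \<circ> \<phi>) 0 = deriv g a * deriv \<phi> 0"
    by (intro DERIV_imp_deriv DERIV_chain)
  then show ?thesis
    using Schwarz by (simp add: norm_mult)
qed

lemma cara_annulus_le_disc_map:
  assumes "\<phi> holomorphic_on ball 0 1" and "\<phi> ` ball 0 1 \<subseteq> annulus s" and "\<phi> 0 = 1"
    and "deriv \<phi> 0 \<noteq> 0"
  shows "cara_annulus s \<le> 1 / norm (deriv \<phi> 0)"
  unfolding cara_annulus_def
proof (rule cSup_least)
  show "{norm (deriv g 1) |g. g holomorphic_on annulus s \<and> g ` annulus s \<subseteq> ball 0 1 \<and> g 1 = 0}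
    \<noteq> {}"
    using holomorphic_on_const[of 0 "annulus s"] by force
next
  fix x
  assume "x \<in> {norm (deriv g 1) |g. g holomorphic_on annulus s \<and> g ` annulus s \<subseteq> ball 0 1 \<and> g 1 = 0}"
  then obtain g where x: "x = norm (deriv g 1)" and "g holomorphic_on annulus s"
    and "g ` annulus s \<subseteq> ball 0 1" and "g 1 = 0"
    by blast
  then have "norm (deriv g 1) * norm (deriv \<phi> 0) \<le> 1"
    using norm_deriv_mult_le_one_Schwarz[OF open_annulus] assms(1-3) by blast
  then show "x \<le> 1 / norm (deriv \<phi> 0)"
    using x assms(4) by (simp add: field_simps)
qed

theorem lemma3:
  fixes r :: real and n :: nat
  assumes "r > 1" and "n > 0"
  shows "cara_annulus (r ^ n) \<le> (1 / real n) * (r / (r - 1))"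
proof -
  define \<rho> where "\<rho> = 1 - 1 / r"
  define \<phi> where "\<phi> = (\<lambda>z::complex. (1 + complex_of_real \<rho> * z) ^ n)"
  have "\<rho> > 0"
    using assms(1) by (simp add: \<rho>_def)
  have disc: "ball 1 \<rho> \<subseteq> annulus r"
    unfolding \<rho>_def using assms(1) by (rule ball_one_subset_annulus)
  have "\<phi> z \<in> annulus (r ^ n)" if "norm z < 1" for z
  proof -
    have "1 + complex_of_real \<rho> * z \<in> ball 1 \<rho>"
      using that \<open>\<rho> > 0\<close> by (simp add: dist_norm norm_mult)
    then show ?thesis
      unfolding \<phi>_def using disc power_mem_annulus assms(2) by blast
  qed
  then have "\<phi> ` ball 0 1 \<subseteq> annulus (r ^ n)"
    by auto
  moreover have "\<phi> holomorphic_on ball 0 1"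
    unfolding \<phi>_def by (intro holomorphic_intros)
  moreover have "deriv \<phi> 0 = of_nat n * complex_of_real \<rho>"
    unfolding \<phi>_def by (rule DERIV_imp_deriv) (auto intro!: derivative_eq_intros)
  ultimately have "cara_annulus (r ^ n) \<le> 1 / (real n * \<rho>)"
    using cara_annulus_le_disc_map[of \<phi>] \<open>\<rho> > 0\<close> assms(2)
    by (simp add: \<phi>_def norm_mult)
  also have "\<dots> = (1 / real n) * (r / (r - 1))"
    using assms(1) by (simp add: \<rho>_def divide_simps)
  finally show ?thesis .
qed

end
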